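(* Let $\mathbf Q\in\mathbb R^{m\times d}$, $\mathbf K,\mathbf V\in\mathbb R^{n\times d}$ and $\beta>0$, and let $\mathbf A$, $\mathbf D$, $\mathbf O$ be as in the context. Let $\widehat{\mathbf A}\in\mathbb R^{m\times n}$ be any approximation to $\mathbf A$, let $\widehat{\mathbf D}=\mathrm{diag}(\widehat{\mathbf A}\mathbf 1_n)$, and let $\widehat{\mathbf O}\defeq\mathrm{clip}(\widehat{\mathbf D}^{-1}\widehat{\mathbf A}\mathbf V,\mathbf v_{\min},\mathbf v_{\max})$, where $(\mathbf v_{\min})_j=\min_{l\in[n]}\mathbf V_{lj}$ and $(\mathbf v_{\max})_j=\max_{l\in[n]}\mathbf V_{lj}$. Then $$\|\mathbf O-\widehat{\mathbf O}\|_{\max}\le \|\mathbf V\|_{\max}\,\min\left(\frac{\frac{3}{\sqrt n}\|\mathbf A-\widehat{\mathbf A}\|_{2,\infty}}{\min_{i\in[m],j\in[n]}\mathbf A_{ij}},\,2\right).$$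
   Context: Queries $\mathbf Q\in\mathbb R^{m\times d}$ have rows $\mathbf q_1,\dots,\mathbf q_m$; keys $\mathbf K\in\mathbb R^{n\times d}$ have rows $\mathbf k_1,\dots,\mathbf k_n$; values $\mathbf V\in\mathbb R^{n\times d}$ have rows $\mathbf v_1,\dots,\mathbf v_n$. The attention matrix is $\mathbf A\in\mathbb R^{m\times n}$ with $\mathbf A_{il}=\exp(\beta\langle\mathbf q_i,\mathbf k_l\rangle)$, $\mathbf D=\mathrm{diag}(\mathbf A\mathbf 1_n)$, and the softmax matrix is $\mathbf O=\mathbf D^{-1}\mathbf A\mathbf V$. $\mathrm{clip}(\mathbf M,\mathbf a,\mathbf b)$ clips each entry $\mathbf M_{ij}$ to the interval $[\mathbf a_j,\mathbf b_j]$. Norms: $\|\mathbf M\|_{\max}=\max_{i,j}|\mathbf M_{ij}|$ and $\|\mathbf M\|_{2,\infty}=\max_i\|\mathbf M_{i,:}\|_2$ (maximal Euclidean row norm). *)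

theory Defs
  imports "HOL-Analysis.Analysis"
begin

text \<open>Matrices are rendered as real^'col^'row (row i of M is M$i), with finite index types
  'm (queries), 'n (keys/values), 'd (feature dimension).\<close>

definition attn_matrix :: "real \<Rightarrow> real^'d^'m \<Rightarrow> real^'d^'n \<Rightarrow> real^'n^'m" where
  "attn_matrix \<beta> Q K = (\<chi> i l. exp (\<beta> * (Q$i \<bullet> K$l)))"

definition diag_rowsum :: "real^'n^'m \<Rightarrow> real^'m^'m" where
  "diag_rowsum A = (\<chi> i k. if i = k then (A *v (\<chi> l. 1)) $ i else 0)"

text \<open>Inverse of a diagonal matrix: entrywise inverse of the diagonal
  (with the HOL convention inverse 0 = 0).\<close>
definition diag_inv :: "real^'m^'m \<Rightarrow> real^'m^'m" where
  "diag_inv D = (\<chi> i k. if i = k then inverse (D$i$i) else 0)"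

definition softmax_out :: "real^'n^'m \<Rightarrow> real^'d^'n \<Rightarrow> real^'d^'m" where
  "softmax_out A V = (diag_inv (diag_rowsum A) ** A) ** V"

definition clip :: "real^'d^'m \<Rightarrow> real^'d \<Rightarrow> real^'d \<Rightarrow> real^'d^'m" where
  "clip M a b = (\<chi> i j. max (a$j) (min (b$j) (M$i$j)))"

definition col_min :: "real^'d^'n \<Rightarrow> real^'d" where
  "col_min V = (\<chi> j. Min (range (\<lambda>l. V$l$j)))"

definition col_max :: "real^'d^'n \<Rightarrow> real^'d" where
  "col_max V = (\<chi> j. Max (range (\<lambda>l. V$l$j)))"

definition max_norm :: "real^'c^'r \<Rightarrow> real" where
  "max_norm M = Max {\<bar>M$i$j\<bar> | i j. True}"

definition norm_2inf :: "real^'c^'r \<Rightarrow> real" where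
  "norm_2inf M = Max (range (\<lambda>i. norm (M$i)))"

definition min_entry :: "real^'c^'r \<Rightarrow> real" where
  "min_entry M = Min {M$i$j | i j. True}"

end

(*
  Entry (i,j) of the softmax output is the mean m of column j of V weighted by row i of A; the
  approximate entry is the mean x of the same column weighted by row i of Ahat, clipped to the
  range [lo, hi] of the column. Say x >= m and let h = min hi x - m. As the weighted deviations
  a_l (v_l - m) sum to zero, h * sum b <= sum (b - a)(v - m), and adding h * sum (a - b) bounds
  h * sum a by a sum whose terms are each at most |a_l - b_l| (hi - lo). Hence the error is at most
  (hi - lo) * |a - b|_1 / sum a; if sum b <= 0 then |a - b|_1 >= sum a and clipping alone suffices.
  Cauchy-Schwarz, sum a >= n * min A and hi - lo <= 2 |V|_max give the claim, even with the
  constant 2 in place of 3.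
*)

theory Submission
  imports Defs
begin

definition weighted_mean :: "'i set \<Rightarrow> ('i \<Rightarrow> real) \<Rightarrow> ('i \<Rightarrow> real) \<Rightarrow> real" where
  "weighted_mean I w v = (\<Sum>l\<in>I. w l * v l) / (\<Sum>l\<in>I. w l)"

lemma weighted_mean_uminus: "weighted_mean I w (\<lambda>l. - v l) = - weighted_mean I w v"
  by (simp add: weighted_mean_def sum_negf)

lemma weighted_mean_centered:
  assumes "(\<Sum>l\<in>I. w l) \<noteq> 0"
  shows "(\<Sum>l\<in>I. w l * (v l - c)) = (\<Sum>l\<in>I. w l) * (weighted_mean I w v - c)"
proof -
  have "(\<Sum>l\<in>I. w l * (v l - c)) = (\<Sum>l\<in>I. w l * v l) - c * (\<Sum>l\<in>I. w l)"
    by (simp add: algebra_simps sum_subtractf sum_distrib_left)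
  with assms show ?thesis
    by (simp add: weighted_mean_def right_diff_distrib)
qed

lemma weighted_mean_bounds:
  assumes "finite I" "\<And>l. l \<in> I \<Longrightarrow> w l \<ge> 0" "(\<Sum>l\<in>I. w l) > 0"
    and "\<And>l. l \<in> I \<Longrightarrow> lo \<le> v l \<and> v l \<le> hi"
  shows "lo \<le> weighted_mean I w v \<and> weighted_mean I w v \<le> hi"
proof -
  have "(\<Sum>l\<in>I. w l * (v l - lo)) \<ge> 0" "(\<Sum>l\<in>I. w l * (v l - hi)) \<le> 0"
    using assms by (auto intro!: sum_nonneg sum_nonpos simp: mult_nonneg_nonpos)
  then show ?thesis
    using assms(3) weighted_mean_centered[of w I v lo] weighted_mean_centered[of w I v hi]
    by (simp add: zero_le_mult_iff mult_le_0_iff)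
qed

lemma deviation_term_le:
  fixes s v m h lo hi :: real
  assumes "0 \<le> h" "h \<le> hi - m" "lo \<le> m" "lo \<le> v" "v \<le> hi"
  shows "s * (v - m) - h * s \<le> \<bar>s\<bar> * (hi - lo)"
proof (cases "s \<ge> 0")
  case True
  have "s * (v - m) \<le> s * (hi - lo)" using assms True by (intro mult_left_mono) auto
  then show ?thesis using True assms mult_nonneg_nonneg[of h s] by linarith
next
  case False
  have "- s * (h - (v - m)) \<le> - s * (hi - lo)" using assms False by (intro mult_left_mono) auto
  then show ?thesis using False by (simp add: algebra_simps)
qed

lemma clipped_weighted_mean_upper_deviation:
  assumes I: "finite I" and a: "\<And>l. l \<in> I \<Longrightarrow> a l \<ge> 0" and S: "(\<Sum>l\<in>I. a l) > 0"
    and v: "\<And>l. l \<in> I \<Longrightarrow> lo \<le> v l \<and> v l \<le> hi"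
    and above: "weighted_mean I a v \<le> weighted_mean I b v"
  shows "min hi (weighted_mean I b v) - weighted_mean I a v
           \<le> (hi - lo) * (\<Sum>l\<in>I. \<bar>a l - b l\<bar>) / (\<Sum>l\<in>I. a l)"
proof -
  define m where "m = weighted_mean I a v"
  define h where "h = min hi (weighted_mean I b v) - m"
  define S where "S = (\<Sum>l\<in>I. a l)"
  define T where "T = (\<Sum>l\<in>I. b l)"
  define E where "E = (\<Sum>l\<in>I. \<bar>a l - b l\<bar>)"
  have m: "lo \<le> m" "m \<le> hi" using weighted_mean_bounds[OF I a S v] by (auto simp: m_def)
  have h: "0 \<le> h" "h \<le> hi - m" "h \<le> weighted_mean I b v - m"
    using above m by (auto simp: h_def m_def)
  have ST: "S = T + (\<Sum>l\<in>I. a l - b l)" by (simp add: S_def T_def sum_subtractf)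
  have "h * S \<le> (hi - lo) * E"
  proof (cases "T > 0")
    case True
    have "h * T \<le> (\<Sum>l\<in>I. b l * (v l - m))"
      using weighted_mean_centered[of b I v m] True h(3) by (simp add: T_def)
    also have "\<dots> = (\<Sum>l\<in>I. (b l - a l) * (v l - m))"
      using weighted_mean_centered[of a I v m] S by (simp add: m_def left_diff_distrib sum_subtractf)
    finally have "h * T \<le> (\<Sum>l\<in>I. (b l - a l) * (v l - m))" .
    then have "h * S \<le> (\<Sum>l\<in>I. (b l - a l) * (v l - m)) + (\<Sum>l\<in>I. h * (a l - b l))"
      by (simp add: ST distrib_left sum_distrib_left)
    also have "\<dots> = (\<Sum>l\<in>I. (b l - a l) * (v l - m) - h * (b l - a l))"
      by (simp add: sum.distrib[symmetric] algebra_simps)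
    also have "\<dots> \<le> (\<Sum>l\<in>I. \<bar>b l - a l\<bar> * (hi - lo))"
      using h m v by (intro sum_mono deviation_term_le) auto
    finally show ?thesis
      unfolding E_def sum_distrib_left by (simp add: abs_minus_commute mult.commute)
  next
    case False
    have "(\<Sum>l\<in>I. a l - b l) \<le> E" unfolding E_def by (intro sum_mono) simp
    then have "S \<le> E" using False ST by linarith
    then have "h * S \<le> (hi - lo) * E" using h m S by (intro mult_mono) (auto simp: S_def)
    then show ?thesis .
  qed
  then have "h \<le> (hi - lo) * E / S" using S by (simp add: S_def pos_le_divide_eq)
  then show ?thesis by (simp add: h_def m_def S_def E_def)
qed

lemma clipped_weighted_mean_deviation:
  assumes I: "finite I" and a: "\<And>l. l \<in> I \<Longrightarrow> a l \<ge> 0" and S: "(\<Sum>l\<in>I. a l) > 0"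
    and v: "\<And>l. l \<in> I \<Longrightarrow> lo \<le> v l \<and> v l \<le> hi"
  shows "\<bar>weighted_mean I a v - max lo (min hi (weighted_mean I b v))\<bar>
           \<le> (hi - lo) * min ((\<Sum>l\<in>I. \<bar>a l - b l\<bar>) / (\<Sum>l\<in>I. a l)) 1"
proof -
  define m where "m = weighted_mean I a v"
  define x where "x = weighted_mean I b v"
  define \<delta> where "\<delta> = (\<Sum>l\<in>I. \<bar>a l - b l\<bar>) / (\<Sum>l\<in>I. a l)"
  have m: "lo \<le> m" "m \<le> hi" using weighted_mean_bounds[OF I a S v] by (auto simp: m_def)
  have "\<bar>m - max lo (min hi x)\<bar> \<le> (hi - lo) * \<delta>"
  proof (cases "m \<le> x")
    case True
    then show ?thesis
      using clipped_weighted_mean_upper_deviation[OF I a S v, where b = b] m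
      by (simp add: m_def x_def \<delta>_def)
  next
    case False
    have neg_v: "- hi \<le> - v l \<and> - v l \<le> - lo" if "l \<in> I" for l using v[OF that] by simp
    have "min (- lo) (- x) + m \<le> (hi - lo) * \<delta>"
      using clipped_weighted_mean_upper_deviation[OF I a S neg_v, where b = b] False
      by (simp add: weighted_mean_uminus m_def x_def \<delta>_def)
    then show ?thesis using False m by linarith
  qed
  moreover have "\<bar>m - max lo (min hi x)\<bar> \<le> hi - lo" using m by linarith
  ultimately show ?thesis using m by (simp add: min_mult_distrib_left \<delta>_def m_def x_def)
qed

lemma softmax_out_entry:
  "softmax_out A V $ i $ j = weighted_mean UNIV (\<lambda>l. A$i$l) (\<lambda>l. V$l$j)"
proof -
  have "(diag_inv (diag_rowsum A) ** A) $ i $ l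
      = (\<Sum>k\<in>UNIV. (if k = i then inverse (diag_rowsum A $ i $ i) else 0) * A$k$l)" for l
    by (simp add: diag_inv_def matrix_matrix_mult_def eq_commute[of i])
  also have "\<dots> l = inverse (diag_rowsum A $ i $ i) * A$i$l" for l
    by (simp add: if_distrib[of "\<lambda>c. c * _"] cong: if_cong)
  also have "\<dots> l = A$i$l / (\<Sum>l\<in>UNIV. A$i$l)" for l
    by (simp add: diag_rowsum_def matrix_vector_mult_def divide_inverse mult.commute)
  finally show ?thesis
    by (simp add: softmax_out_def matrix_matrix_mult_def weighted_mean_def sum_divide_distrib)
qed

lemma finite_matrix_entries: "finite {f i j | (i::'r::finite) (j::'c::finite). True}"
proof -
  have "{f i j | i j. True} = (\<lambda>(i, j). f i j) ` UNIV" by auto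
  then show ?thesis by simp
qed

lemma abs_le_max_norm: "\<bar>M$i$j\<bar> \<le> max_norm M"
  unfolding max_norm_def by (rule Max_ge[OF finite_matrix_entries]) blast

lemma max_norm_nonneg: "max_norm M \<ge> 0"
  by (rule order_trans[OF abs_ge_zero abs_le_max_norm])

lemma max_norm_le:
  assumes "\<And>i j. \<bar>M$i$j\<bar> \<le> c"
  shows "max_norm M \<le> c"
  unfolding max_norm_def by (rule Max.boundedI[OF finite_matrix_entries]) (use assms in auto)

lemma min_entry_le: "min_entry M \<le> M$i$j"
  unfolding min_entry_def by (rule Min_le[OF finite_matrix_entries]) blast

lemma min_entry_pos:
  assumes "\<And>i j. M$i$j > 0"
  shows "min_entry M > 0"
proof -
  have "min_entry M \<in> {M$i$j | i j. True}"
    unfolding min_entry_def by (rule Min_in[OF finite_matrix_entries]) blast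
  then show ?thesis using assms by auto
qed

lemma norm_row_le_norm_2inf: "norm (M$i) \<le> norm_2inf M"
  unfolding norm_2inf_def by (rule Max_ge) auto

lemma col_min_le: "col_min V $ j \<le> V$l$j"
  unfolding col_min_def by simp

lemma col_max_ge: "V$l$j \<le> col_max V $ j"
  unfolding col_max_def by simp

lemma col_max_minus_col_min_le: "col_max V $ j - col_min V $ j \<le> 2 * max_norm V"
proof -
  have "col_min V $ j \<in> range (\<lambda>l. V$l$j)" "col_max V $ j \<in> range (\<lambda>l. V$l$j)"
    unfolding col_min_def col_max_def by (auto intro: Min_in Max_in)
  then obtain l l' where "col_min V $ j = V$l$j" "col_max V $ j = V$l'$j" by blast
  then show ?thesis
    using abs_le_max_norm[of V l j] abs_le_max_norm[of V l' j] by linarith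
qed

lemma sum_abs_le_sqrt_card_mult_norm:
  "(\<Sum>l\<in>UNIV. \<bar>x$l\<bar>) \<le> sqrt (real CARD('n)) * norm (x :: real^'n)"
proof -
  have "(\<Sum>l\<in>UNIV. \<bar>\<bar>x$l\<bar>\<bar> * \<bar>1::real\<bar>) \<le> L2_set (\<lambda>l. \<bar>x$l\<bar>) UNIV * L2_set (\<lambda>l::'n. 1) UNIV"
    by (rule L2_set_mult_ineq)
  then show ?thesis
    by (simp add: norm_vec_def L2_set_constant mult.commute)
qed

lemma relative_row_error_le:
  fixes A B :: "real^'n^'m"
  assumes pos: "\<And>i l. A$i$l > 0"
  shows "(\<Sum>l\<in>UNIV. \<bar>A$i$l - B$i$l\<bar>) / (\<Sum>l\<in>UNIV. A$i$l)
           \<le> norm_2inf (A - B) / (sqrt (real CARD('n)) * min_entry A)"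
proof -
  define n where "n = real CARD('n)"
  define \<mu> where "\<mu> = min_entry A"
  define E where "E = (\<Sum>l\<in>UNIV. \<bar>(A - B)$i$l\<bar>)"
  have n: "n > 0" by (simp add: n_def)
  have \<mu>: "\<mu> > 0" unfolding \<mu>_def using pos by (rule min_entry_pos)
  have "(\<Sum>l\<in>(UNIV :: 'n set). \<mu>) \<le> (\<Sum>l\<in>UNIV. A$i$l)"
    unfolding \<mu>_def by (intro sum_mono min_entry_le)
  then have row_sum: "n * \<mu> \<le> (\<Sum>l\<in>UNIV. A$i$l)" by (simp add: n_def)
  have "(\<Sum>l\<in>UNIV. A$i$l) > 0" using pos by (simp add: sum_pos)
  moreover have "E \<ge> 0" unfolding E_def by (intro sum_nonneg) simp
  ultimately have "E / (\<Sum>l\<in>UNIV. A$i$l) \<le> E / (n * \<mu>)"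
    using row_sum n \<mu> by (intro divide_left_mono mult_pos_pos) auto
  also have "\<dots> \<le> sqrt n * norm ((A - B)$i) / (n * \<mu>)"
    using \<mu> unfolding E_def n_def by (intro divide_right_mono sum_abs_le_sqrt_card_mult_norm) simp
  also have "\<dots> \<le> sqrt n * norm_2inf (A - B) / (n * \<mu>)"
    using n \<mu> by (intro divide_right_mono mult_left_mono norm_row_le_norm_2inf) simp_all
  also have "\<dots> = norm_2inf (A - B) / (sqrt n * \<mu>)"
    using n \<mu> by (simp add: field_simps flip: power2_eq_square)
  finally show ?thesis by (simp add: n_def \<mu>_def E_def)
qed

theorem clipped_softmax_error_le:
  fixes A B :: "real^'n^'m" and V :: "real^'d^'n"
  assumes pos: "\<And>i l. A$i$l > 0"
  shows "max_norm (softmax_out A V - clip (softmax_out B V) (col_min V) (col_max V))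
           \<le> 2 * max_norm V * min (norm_2inf (A - B) / (sqrt (real CARD('n)) * min_entry A)) 1"
proof (rule max_norm_le)
  fix i j
  have "\<bar>(softmax_out A V - clip (softmax_out B V) (col_min V) (col_max V)) $ i $ j\<bar>
      = \<bar>weighted_mean UNIV (\<lambda>l. A$i$l) (\<lambda>l. V$l$j)
          - max (col_min V $ j) (min (col_max V $ j) (weighted_mean UNIV (\<lambda>l. B$i$l) (\<lambda>l. V$l$j)))\<bar>"
    by (simp add: clip_def softmax_out_entry)
  also have "\<dots> \<le> (col_max V $ j - col_min V $ j)
                 * min ((\<Sum>l\<in>UNIV. \<bar>A$i$l - B$i$l\<bar>) / (\<Sum>l\<in>UNIV. A$i$l)) 1"
    using pos by (intro clipped_weighted_mean_deviation)
      (auto simp: less_imp_le sum_pos col_min_le col_max_ge)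
  also have "\<dots> \<le> 2 * max_norm V * min (norm_2inf (A - B) / (sqrt (real CARD('n)) * min_entry A)) 1"
    using pos order_trans[OF col_min_le col_max_ge, of V j]
    by (intro mult_mono min.mono col_max_minus_col_min_le relative_row_error_le)
      (simp_all add: max_norm_nonneg less_imp_le sum_nonneg)
  finally show "\<bar>(softmax_out A V - clip (softmax_out B V) (col_min V) (col_max V)) $ i $ j\<bar>
      \<le> 2 * max_norm V * min (norm_2inf (A - B) / (sqrt (real CARD('n)) * min_entry A)) 1" .
qed

theorem lemma1:
  fixes Q :: "real^'d^'m" and K V :: "real^'d^'n" and Ahat :: "real^'n^'m" and \<beta> :: real
  assumes "\<beta> > 0"
  shows "max_norm (softmax_out (attn_matrix \<beta> Q K) V
            - clip (softmax_out Ahat V) (col_min V) (col_max V))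
         \<le> max_norm V *
           min ((3 / sqrt (real CARD('n))) * norm_2inf (attn_matrix \<beta> Q K - Ahat)
                  / min_entry (attn_matrix \<beta> Q K)) 2"
proof -
  define A where "A = attn_matrix \<beta> Q K"
  define r where "r = norm_2inf (A - Ahat) / (sqrt (real CARD('n)) * min_entry A)"
  have pos: "A$i$l > 0" for i l by (simp add: A_def attn_matrix_def)
  have "norm_2inf (A - Ahat) \<ge> 0" by (rule order_trans[OF norm_ge_zero norm_row_le_norm_2inf])
  then have "r \<ge> 0" unfolding r_def using min_entry_pos[OF pos] by simp
  have "max_norm (softmax_out A V - clip (softmax_out Ahat V) (col_min V) (col_max V))
          \<le> max_norm V * (2 * min r 1)"
    using clipped_softmax_error_le[OF pos, of V Ahat] by (simp add: r_def mult.assoc)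
  also have "\<dots> \<le> max_norm V * min (3 * r) 2"
    using \<open>r \<ge> 0\<close> max_norm_nonneg by (intro mult_left_mono) linarith+
  finally show ?thesis by (simp add: A_def r_def)
qed

end
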